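(* Consider the CT–DT interconnected system described in the context, and let Assumptions (A1), (A2), (A3) hold with respect to the norms $\|\cdot\|_{\mathcal X}$ and $\|\cdot\|_{\mathcal Z}$. Suppose that $$-\mathsf{osLip}_x(f)\,\big(1-\mathsf{Lip}_z(\mathsf G)\big) > \mathsf{Lip}_z(f)\,\mathsf{Lip}_x(\mathsf G).$$ Then for every $n\in\mathbb Z_{>0}$ and every $T>0$ there exists a vector $\eta=(\eta_1,\eta_2)\in\mathbb R^2_{>0}$ such that, with the composite norm $\|(x,z)\|_{\mathsf{cmp}}:=\big\|(\|x\|_{\mathcal X},\|z\|_{\mathcal Z})\big\|_{2,[\eta]}$ on $\mathbb R^{n_x+n_z}$, where $\|(v_1,v_2)\|_{2,[\eta]}:=\sqrt{\eta_1v_1^2+\eta_2v_2^2}$: (i) the interconnected system is $T$-discrete-time contractive with respect to $\|\cdot\|_{\mathsf{cmp}}$, i.e., there is $b\in(0,1)$ with $\|y(kT)-\bar y(kT)\|_{\mathsf{cmp}}\le b^k\|y(0)-\bar y(0)\|_{\mathsf{cmp}}$ for all $k\in\mathbb Z_{\ge0}$ and all pairs of solutions $y,\bar y$; (ii) the origin is globally exponentially stable for the interconnected system, i.e., there exist $r\ge0$, $a>0$ with $\|y(t)\|_{\mathsf{cmp}}\le r e^{-at}\|y(0)\|_{\mathsf{cmp}}$ for all $t\ge0$ and all solutions $y$.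
   Context: Setup. Let $\|\cdot\|_{\mathcal X}$ be a norm on $\mathbb R^{n_x}$ and $\|\cdot\|_{\mathcal Z}$ a norm on $\mathbb R^{n_z}$; $\mathcal X\subseteq\mathbb R^{n_x}$, $\mathcal Z\subseteq\mathbb R^{n_z}$ are convex sets. Let $f:\mathcal X\times\mathcal Z\to\mathbb R^{n_x}$ and $\mathsf G:\mathcal X\times\mathcal Z\to\mathcal Z$ be continuous, and define $\mathsf G^1(x,z)=\mathsf G(x,z)$, $\mathsf G^{m+1}(x,z)=\mathsf G(x,\mathsf G^m(x,z))$. For $T>0$ and $n\in\mathbb Z_{>0}$ the interconnected (sampled-data) system is $\dot x(t)=f(x(t),z(t))$, $z_k=\mathsf G^n(x(kT),z_{k-1})$, $z(t)=z_k$ for $t\in[kT,(k+1)T)$, $k\in\mathbb Z_{\ge0}$, with state $y(t)=(x(t),z(t))$; $\mathcal X\times\mathcal Z$ is assumed forward invariant. It is assumed $f(0,0)=0$ and $\mathsf G(0,0)=0$. Lipschitz notions. $\mathsf{Lip}_z(f):=\sup_x\sup_{z_1\ne z_2}\|f(x,z_1)-f(x,z_2)\|_{\mathcal X}/\|z_1-z_2\|_{\mathcal Z}$; $\mathsf{Lip}_x(f)$, $\mathsf{Lip}_x(\mathsf G)$, $\mathsf{Lip}_z(\mathsf G)$ are defined analogously (sup over the other argument, with the appropriate norms). Let $\llbracket\cdot;\cdot\rrbracket$ be a weak pairing on $\mathbb R^{n_x}$ compatible with $\|\cdot\|_{\mathcal X}$ (in particular $\llbracket x;x\rrbracket=\|x\|_{\mathcal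 X}^2$, sub-additive in first argument, and $\llbracket x;y\rrbracket\le\|x\|_{\mathcal X}\|y\|_{\mathcal X}$; for the Euclidean norm it is the inner product). The one-sided Lipschitz constant is $\mathsf{osLip}_x(f):=\sup_z\sup_{x_1\ne x_2}\llbracket f(x_1,z)-f(x_2,z);x_1-x_2\rrbracket/\|x_1-x_2\|_{\mathcal X}^2$, and for a map $F:\mathcal X\to\mathbb R^{n_x}$, $\mathsf{osLip}(F):=\sup_{x_1\ne x_2}\llbracket F(x_1)-F(x_2);x_1-x_2\rrbracket/\|x_1-x_2\|_{\mathcal X}^2$. Assumptions. (A1) $x\mapsto f(x,z)$ is Lipschitz uniformly in $z\in\mathcal Z$ ($\mathsf{Lip}_x(f)<\infty$). (A2) $\mathsf{Lip}_z(f)\in(0,\infty)$ and $\mathsf{Lip}_x(\mathsf G)\in(0,\infty)$. (A3) $\mathsf{Lip}_z(\mathsf G)<1$. *)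

theory Defs
  imports "HOL-Analysis.Analysis"
begin

definition is_norm :: "('a::real_vector \<Rightarrow> real) \<Rightarrow> bool" where
  "is_norm N \<longleftrightarrow>
     (\<forall>x. 0 \<le> N x) \<and> (\<forall>x. N x = 0 \<longleftrightarrow> x = 0) \<and>
     (\<forall>c x. N (scaleR c x) = \<bar>c\<bar> * N x) \<and> (\<forall>x y. N (x + y) \<le> N x + N y)"

definition weak_pairing :: "('a::real_normed_vector \<Rightarrow> 'a \<Rightarrow> real) \<Rightarrow> bool" where
  "weak_pairing wp \<longleftrightarrow>
     (\<forall>x1 x2 y. wp (x1 + x2) y \<le> wp x1 y + wp x2 y) \<and>
     (\<forall>y. continuous_on UNIV (\<lambda>x. wp x y)) \<and>
     (\<forall>\<alpha> x y. \<alpha> \<ge> 0 \<longrightarrow> wp (\<alpha> *\<^sub>R x) y = \<alpha> * wp x y \<and> wp x (\<alpha> *\<^sub>R y) = \<alpha> * wp x y) \<and>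
     (\<forall>x y. wp (- x) (- y) = wp x y) \<and>
     (\<forall>x. x \<noteq> 0 \<longrightarrow> wp x x > 0) \<and>
     (\<forall>x y. \<bar>wp x y\<bar> \<le> sqrt (wp x x) * sqrt (wp y y))"

definition compatible_weak_pairing ::
  "('a::real_normed_vector \<Rightarrow> 'a \<Rightarrow> real) \<Rightarrow> ('a \<Rightarrow> real) \<Rightarrow> bool" where
  "compatible_weak_pairing wp N \<longleftrightarrow> weak_pairing wp \<and> (\<forall>x. wp x x = (N x)\<^sup>2)"

definition Lip_x_f ::
  "('x \<Rightarrow> real) \<Rightarrow> 'x set \<Rightarrow> 'z set \<Rightarrow> ('x::real_vector \<times> 'z \<Rightarrow> 'x) \<Rightarrow> ereal" where
  "Lip_x_f nX X Z f = (SUP p \<in> {(z, x1, x2). z \<in> Z \<and> x1 \<in> X \<and> x2 \<in> X \<and> x1 \<noteq> x2}.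
      (case p of (z, x1, x2) \<Rightarrow> ereal (nX (f (x1, z) - f (x2, z)) / nX (x1 - x2))))"

definition Lip_z_f ::
  "('x \<Rightarrow> real) \<Rightarrow> ('z \<Rightarrow> real) \<Rightarrow> 'x set \<Rightarrow> 'z set \<Rightarrow> ('x::real_vector \<times> 'z::real_vector \<Rightarrow> 'x) \<Rightarrow> ereal" where
  "Lip_z_f nX nZ X Z f = (SUP p \<in> {(x, z1, z2). x \<in> X \<and> z1 \<in> Z \<and> z2 \<in> Z \<and> z1 \<noteq> z2}.
      (case p of (x, z1, z2) \<Rightarrow> ereal (nX (f (x, z1) - f (x, z2)) / nZ (z1 - z2))))"

definition Lip_x_G ::
  "('x \<Rightarrow> real) \<Rightarrow> ('z \<Rightarrow> real) \<Rightarrow> 'x set \<Rightarrow> 'z set \<Rightarrow> ('x::real_vector \<times> 'z::real_vector \<Rightarrow> 'z) \<Rightarrow> ereal" where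
  "Lip_x_G nX nZ X Z G = (SUP p \<in> {(z, x1, x2). z \<in> Z \<and> x1 \<in> X \<and> x2 \<in> X \<and> x1 \<noteq> x2}.
      (case p of (z, x1, x2) \<Rightarrow> ereal (nZ (G (x1, z) - G (x2, z)) / nX (x1 - x2))))"

definition Lip_z_G ::
  "('z \<Rightarrow> real) \<Rightarrow> 'x set \<Rightarrow> 'z set \<Rightarrow> ('x \<times> 'z::real_vector \<Rightarrow> 'z) \<Rightarrow> ereal" where
  "Lip_z_G nZ X Z G = (SUP p \<in> {(x, z1, z2). x \<in> X \<and> z1 \<in> Z \<and> z2 \<in> Z \<and> z1 \<noteq> z2}.
      (case p of (x, z1, z2) \<Rightarrow> ereal (nZ (G (x, z1) - G (x, z2)) / nZ (z1 - z2))))"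

definition osLip_x_f ::
  "('x \<Rightarrow> 'x \<Rightarrow> real) \<Rightarrow> ('x \<Rightarrow> real) \<Rightarrow> 'x set \<Rightarrow> 'z set \<Rightarrow> ('x::real_vector \<times> 'z \<Rightarrow> 'x) \<Rightarrow> ereal" where
  "osLip_x_f wp nX X Z f = (SUP p \<in> {(z, x1, x2). z \<in> Z \<and> x1 \<in> X \<and> x2 \<in> X \<and> x1 \<noteq> x2}.
      (case p of (z, x1, x2) \<Rightarrow> ereal (wp (f (x1, z) - f (x2, z)) (x1 - x2) / (nX (x1 - x2))\<^sup>2)))"

fun Giter :: "('x \<times> 'z \<Rightarrow> 'z) \<Rightarrow> nat \<Rightarrow> 'x \<Rightarrow> 'z \<Rightarrow> 'z" where
  "Giter G 0 x z = z"
| "Giter G (Suc m) x z = G (x, Giter G m x z)"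

text \<open>Index shift: zs 0 = z_{-1}, zs (Suc k) = z_k.  The held signal z(t) = z_k on [kT,(k+1)T).\<close>
definition held :: "real \<Rightarrow> (nat \<Rightarrow> 'z) \<Rightarrow> real \<Rightarrow> 'z" where
  "held T zs t = zs (Suc (nat \<lfloor>t / T\<rfloor>))"

definition is_solution ::
  "('x::real_normed_vector \<times> 'z \<Rightarrow> 'x) \<Rightarrow> ('x \<times> 'z \<Rightarrow> 'z) \<Rightarrow> 'x set \<Rightarrow> 'z set \<Rightarrow> real \<Rightarrow> nat \<Rightarrow>
   (real \<Rightarrow> 'x) \<Rightarrow> (nat \<Rightarrow> 'z) \<Rightarrow> bool" where
  "is_solution f G X Z T n x zs \<longleftrightarrow>
     (\<forall>t\<ge>0. x t \<in> X) \<and> (\<forall>k. zs k \<in> Z) \<and>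
     (\<forall>k. zs (Suc k) = Giter G n (x (real k * T)) (zs k)) \<and>
     continuous_on {0..} x \<and>
     (\<forall>k. \<forall>t \<in> {real k * T .. real (Suc k) * T}.
        (x has_vector_derivative f (x t, zs (Suc k))) (at t within {real k * T .. real (Suc k) * T}))"

definition cmp_norm :: "('x \<Rightarrow> real) \<Rightarrow> ('z \<Rightarrow> real) \<Rightarrow> real \<Rightarrow> real \<Rightarrow> 'x \<Rightarrow> 'z \<Rightarrow> real" where
  "cmp_norm nX nZ \<eta>1 \<eta>2 x z = sqrt (\<eta>1 * (nX x)\<^sup>2 + \<eta>2 * (nZ z)\<^sup>2)"

end

theory Submission
  imports Defs
begin

text \<open>Between two sampling instants the held input \<open>z\<^sub>k\<close> is constant, so by the one-sided
  Lipschitz bound the distance of two \<open>x\<close>-trajectories obeys the comparison inequality of a scalar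
  linear ODE with rate \<open>c = osLip\<^sub>x(f) < 0\<close> and forcing \<open>Lip\<^sub>z(f) \<parallel>\<Delta>z\<^sub>k\<parallel>\<close>, while the update
  \<open>G\<^sup>n\<close> is Lipschitz in \<open>x\<close> and a contraction in \<open>z\<close>. Hence the sampled errors
  \<open>(\<parallel>\<Delta>x(kT)\<parallel>, \<parallel>\<Delta>z\<^sub>k\<parallel>)\<close> are dominated componentwise by a nonnegative \<open>2\<times>2\<close> matrix whose
  spectral radius is below \<open>1\<close> exactly under the small-gain condition, and such a matrix contracts a
  weighted Euclidean norm on \<open>\<real>\<^sup>2\<close> (Schur test). Comparing with the zero solution gives
  exponential stability, since between samples the error grows by at most a constant factor.\<close>

lemma is_normD:
  assumes "is_norm N"
  shows "N x \<ge> 0" "N 0 = 0" "N (x + y) \<le> N x + N y" "N (c *\<^sub>R x) = \<bar>c\<bar> * N x"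
    "N (x - y) = N (y - x)" "x \<noteq> 0 \<Longrightarrow> N x > 0"
proof -
  show "N x \<ge> 0" "N 0 = 0" "N (x + y) \<le> N x + N y" "N (c *\<^sub>R x) = \<bar>c\<bar> * N x"
    using assms unfolding is_norm_def by auto
  show "x \<noteq> 0 \<Longrightarrow> N x > 0"
    using assms unfolding is_norm_def by (metis less_eq_real_def)
  show "N (x - y) = N (y - x)"
    using assms unfolding is_norm_def
    by (metis abs_minus_cancel abs_one mult_1 minus_diff_eq scaleR_minus1_left)
qed

lemma is_norm_sum_le:
  assumes "is_norm N" "finite A"
  shows "N (sum g A) \<le> (\<Sum>i\<in>A. N (g i))"
  using assms(2)
proof (induction A rule: finite_induct)
  case empty
  then show ?case using is_normD[OF assms(1)] by simp
next
  case (insert i A)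
  then show ?case using is_normD(3)[OF assms(1), of "g i" "sum g A"] by simp
qed

lemma is_norm_le_mult_norm:
  fixes N :: "real^'n \<Rightarrow> real"
  assumes "is_norm N"
  obtains C where "C \<ge> 0" "\<And>x. N x \<le> C * norm x"
proof
  define C where "C = (\<Sum>i\<in>UNIV. N (axis i (1::real)))"
  show "C \<ge> 0" unfolding C_def by (intro sum_nonneg) (simp add: is_normD[OF assms])
  fix x :: "real^'n"
  have "N x = N (\<Sum>i\<in>UNIV. x $ i *\<^sub>R axis i 1)"
    using basis_expansion[of x] by (simp add: scalar_mult_eq_scaleR)
  also have "\<dots> \<le> (\<Sum>i\<in>UNIV. N (x $ i *\<^sub>R axis i 1))"
    by (rule is_norm_sum_le[OF assms]) simp
  also have "\<dots> = (\<Sum>i\<in>UNIV. \<bar>x $ i\<bar> * N (axis i 1))"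
    by (simp add: is_normD(4)[OF assms])
  also have "\<dots> \<le> (\<Sum>i\<in>UNIV. norm x * N (axis i 1))"
    by (intro sum_mono mult_right_mono component_le_norm_cart) (simp add: is_normD[OF assms])
  also have "\<dots> = C * norm x" unfolding C_def by (simp add: sum_distrib_left mult.commute)
  finally show "N x \<le> C * norm x" .
qed

lemma is_norm_continuous_on:
  fixes N :: "real^'n \<Rightarrow> real"
  assumes "is_norm N"
  shows "continuous_on S N"
proof -
  obtain C where C: "C \<ge> 0" "\<And>x. N x \<le> C * norm x"
    using is_norm_le_mult_norm[OF assms] by blast
  have "C-lipschitz_on S N"
  proof (rule lipschitz_onI)
    fix x y
    have "N x \<le> N y + N (x - y)" "N y \<le> N x + N (x - y)"
      using is_normD(3,5)[OF assms] by (metis add_diff_cancel_left' diff_add_cancel)+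
    then have "\<bar>N x - N y\<bar> \<le> N (x - y)" by linarith
    also have "\<dots> \<le> C * dist x y" using C(2) by (simp add: dist_norm)
    finally show "dist (N x) (N y) \<le> C * dist x y" by (simp add: dist_real_def)
  qed (use C in auto)
  then show ?thesis by (rule lipschitz_on_continuous_on)
qed

lemma compatible_weak_pairingD:
  assumes "compatible_weak_pairing wp N" "is_norm N"
  shows "wp (x1 + x2) y \<le> wp x1 y + wp x2 y" "wp x x = (N x)\<^sup>2"
    "a \<ge> 0 \<Longrightarrow> wp (a *\<^sub>R x) y = a * wp x y" "wp x y \<le> N x * N y"
proof -
  show "wp (x1 + x2) y \<le> wp x1 y + wp x2 y" "wp x x = (N x)\<^sup>2"
    "a \<ge> 0 \<Longrightarrow> wp (a *\<^sub>R x) y = a * wp x y"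
    using assms(1) unfolding compatible_weak_pairing_def weak_pairing_def by auto
  have "wp x y \<le> sqrt (wp x x) * sqrt (wp y y)"
    using assms(1) unfolding compatible_weak_pairing_def weak_pairing_def by (meson abs_le_D1)
  then show "wp x y \<le> N x * N y"
    using assms(1) is_normD(1)[OF assms(2)] unfolding compatible_weak_pairing_def by simp
qed

text \<open>The first zero of \<open>g\<close> in \<open>(a, t]\<close> would have no positive value of \<open>g\<close> before it.\<close>
lemma neg_on_interval_if_zeros_preceded_by_pos:
  fixes g :: "real \<Rightarrow> real"
  assumes cont: "continuous_on {a..b} g" and ga: "g a < 0"
    and zeros: "\<And>t. t \<in> {a<..b} \<Longrightarrow> g t = 0 \<Longrightarrow> \<exists>s\<in>{a..<t}. g s > 0"
    and t: "t \<in> {a..b}"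
  shows "g t < 0"
proof (rule ccontr)
  assume "\<not> g t < 0"
  have cont_t: "continuous_on {a..t} g" using t by (intro continuous_on_subset[OF cont]) auto
  define S where "S = {x \<in> {a..t}. g x = 0}"
  have "S \<noteq> {}"
    using IVT'[of g a 0 t, OF _ _ _ cont_t] \<open>\<not> g t < 0\<close> ga t unfolding S_def by force
  moreover have bdd: "bdd_below S" unfolding S_def by (rule bdd_belowI[of _ a]) auto
  moreover have "closed S"
    unfolding S_def by (rule continuous_closed_preimage_constant[OF cont_t]) simp
  ultimately have "Inf S \<in> S" by (rule closed_contains_Inf)
  then have t0: "Inf S \<in> {a<..b}" "g (Inf S) = 0"
    using ga t unfolding S_def by (auto simp: less_eq_real_def)
  then obtain s where s: "s \<in> {a..<Inf S}" "g s > 0" using zeros by blast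
  have "continuous_on {a..s} g" using s t0 by (intro continuous_on_subset[OF cont]) auto
  then obtain x where x: "a \<le> x" "x \<le> s" "g x = 0" using IVT'[of g a 0 s] s ga by auto
  then have "x \<in> S" using s t0 \<open>Inf S \<in> S\<close> unfolding S_def by auto
  then show False using cInf_lower[OF _ bdd] x s by fastforce
qed

lemma lt_of_left_Dini_lt_derivative:
  fixes phi psi psi' :: "real \<Rightarrow> real"
  assumes cont: "continuous_on {a..b} phi" "continuous_on {a..b} psi"
    and start: "phi a < psi a"
    and psi_deriv: "\<And>t. t \<in> {a<..b} \<Longrightarrow> (psi has_real_derivative psi' t) (at t)"
    and Dini: "\<And>t. t \<in> {a<..b} \<Longrightarrow> phi t = psi t \<Longrightarrow> \<exists>K < psi' t. \<forall>\<epsilon>>0. \<exists>d>0.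
       \<forall>s\<in>{a..t}. t - d < s \<longrightarrow> phi t \<le> phi s + (t - s) * (K + \<epsilon>)"
    and t: "t \<in> {a..b}"
  shows "phi t < psi t"
proof -
  have "phi t - psi t < 0"
  proof (rule neg_on_interval_if_zeros_preceded_by_pos[OF _ _ _ t])
    show "continuous_on {a..b} (\<lambda>s. phi s - psi s)" using cont by (intro continuous_intros)
    show "phi a - psi a < 0" using start by simp
    fix t' assume t': "t' \<in> {a<..b}" "phi t' - psi t' = 0"
    then have "phi t' = psi t'" by simp
    then obtain K where K: "K < psi' t'" and "\<forall>\<epsilon>>0. \<exists>d>0.
        \<forall>s\<in>{a..t'}. t' - d < s \<longrightarrow> phi t' \<le> phi s + (t' - s) * (K + \<epsilon>)"
      using Dini[OF t'(1)] by blast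
    moreover define \<epsilon> where "\<epsilon> = (psi' t' - K) / 4"
    ultimately obtain d1 where d1: "d1 > 0"
      "\<And>s. s \<in> {a..t'} \<Longrightarrow> t' - d1 < s \<Longrightarrow> phi t' \<le> phi s + (t' - s) * (K + \<epsilon>)"
      by (metis diff_gt_0_iff_gt zero_less_divide_iff zero_less_numeral)
    have "\<epsilon> > 0" using K unfolding \<epsilon>_def by simp
    then obtain d2 where d2: "d2 > 0"
      "\<And>s. \<bar>s - t'\<bar> < d2 \<Longrightarrow> \<bar>psi s - psi t' - psi' t' * (s - t')\<bar> \<le> \<epsilon> * \<bar>s - t'\<bar>"
      using psi_deriv[OF t'(1)] unfolding has_field_derivative_def has_derivative_at_alt
      by (metis real_norm_def)
    define h where "h = min (t' - a) (min d1 d2 / 2)"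
    have h: "0 < h" "h \<le> t' - a" "h < d1" "h < d2" unfolding h_def using t' d1 d2 by auto
    have "phi t' \<le> phi (t' - h) + h * K + h * \<epsilon>"
      using d1(2)[of "t' - h"] h by (simp add: algebra_simps)
    moreover have "psi (t' - h) \<le> psi t' - h * psi' t' + h * \<epsilon>"
      using d2(2)[of "t' - h"] h by (simp add: abs_le_iff mult.commute)
    moreover have "h * psi' t' - h * K = 4 * (h * \<epsilon>)"
      unfolding \<epsilon>_def by (simp add: algebra_simps)
    ultimately have "phi (t' - h) - psi (t' - h) \<ge> 2 * (h * \<epsilon>)"
      using \<open>phi t' = psi t'\<close> by linarith
    moreover have "0 < h * \<epsilon>" using h \<open>\<epsilon> > 0\<close> by simp
    ultimately have "phi (t' - h) - psi (t' - h) > 0" by linarith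
    then show "\<exists>s\<in>{a..<t'}. phi s - psi s > 0" using h by (intro bexI[of _ "t' - h"]) auto
  qed
  then show ?thesis by simp
qed

lemma weak_pairing_left_Dini_bound:
  fixes w :: "real \<Rightarrow> real^'n" and N :: "real^'n \<Rightarrow> real"
  assumes normN: "is_norm N" and wpc: "compatible_weak_pairing wp N"
    and der: "(w has_vector_derivative v) (at t within S)"
    and osl: "wp v (w t) \<le> K * N (w t)" and pos: "N (w t) > 0" and \<epsilon>: "\<epsilon> > 0"
  shows "\<exists>d>0. \<forall>s\<in>S. t - d < s \<longrightarrow> s \<le> t \<longrightarrow> N (w t) \<le> N (w s) + (t - s) * (K + \<epsilon>)"
proof -
  obtain C where C: "C \<ge> 0" "\<And>x. N x \<le> C * norm x"
    using is_norm_le_mult_norm[OF normN] by blast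
  have "\<epsilon> / (C + 1) > 0" using C \<epsilon> by simp
  then obtain d where d: "d > 0" "\<And>s. s \<in> S \<Longrightarrow> \<bar>s - t\<bar> < d \<Longrightarrow>
      norm (w s - w t - (s - t) *\<^sub>R v) \<le> \<epsilon> / (C + 1) * \<bar>s - t\<bar>"
    using der unfolding has_vector_derivative_def has_derivative_within_alt by (metis real_norm_def)
  have "N (w t) \<le> N (w s) + (t - s) * (K + \<epsilon>)" if s: "s \<in> S" "t - d < s" "s \<le> t" for s
  proof -
    define r where "r = w t - w s - (t - s) *\<^sub>R v"
    have "norm r \<le> \<epsilon> / (C + 1) * (t - s)"
      using d(2)[OF s(1)] s unfolding r_def by (simp add: norm_minus_commute algebra_simps)
    then have "N r \<le> C * (\<epsilon> / (C + 1) * (t - s))"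
      using C by (meson mult_left_mono order_trans)
    also have "\<dots> = C * \<epsilon> / (C + 1) * (t - s)" by simp
    also have "\<dots> \<le> \<epsilon> * (t - s)"
      using C \<epsilon> s by (intro mult_right_mono) (auto simp: field_simps)
    finally have Nr: "N r \<le> \<epsilon> * (t - s)" .
    have "w t = w s + ((t - s) *\<^sub>R v + r)" unfolding r_def by simp
    then have "(N (w t))\<^sup>2 = wp (w s + ((t - s) *\<^sub>R v + r)) (w t)"
      using compatible_weak_pairingD(2)[OF wpc normN] by metis
    also have "\<dots> \<le> wp (w s) (w t) + wp ((t - s) *\<^sub>R v) (w t) + wp r (w t)"
      using compatible_weak_pairingD(1)[OF wpc normN, of "w s" "(t - s) *\<^sub>R v + r" "w t"]
        compatible_weak_pairingD(1)[OF wpc normN, of "(t - s) *\<^sub>R v" r "w t"] by linarith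
    also have "\<dots> \<le> N (w s) * N (w t) + (t - s) * (K * N (w t)) + N r * N (w t)"
      using compatible_weak_pairingD(3,4)[OF wpc normN] mult_left_mono[OF osl, of "t - s"] s
      by (intro add_mono) auto
    also have "\<dots> = (N (w s) + (t - s) * K + N r) * N (w t)" by (simp add: algebra_simps)
    finally have "N (w t) \<le> N (w s) + (t - s) * K + N r"
      using pos by (simp add: power2_eq_square)
    then show ?thesis using Nr by (simp add: algebra_simps)
  qed
  then show ?thesis using d(1) by blast
qed

lemma norm_le_exp_comparison:
  fixes w v :: "real \<Rightarrow> real^'n" and N :: "real^'n \<Rightarrow> real"
  assumes normN: "is_norm N" and wpc: "compatible_weak_pairing wp N"
    and c: "c < 0" and D: "D \<ge> 0"
    and der: "\<And>t. t \<in> {a..b} \<Longrightarrow> (w has_vector_derivative v t) (at t within {a..b})"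
    and osl: "\<And>t. t \<in> {a..b} \<Longrightarrow> wp (v t) (w t) \<le> c * (N (w t))\<^sup>2 + D * N (w t)"
    and t: "t \<in> {a..b}"
  shows "N (w t) \<le> exp (c * (t - a)) * N (w a) + D / (-c) * (1 - exp (c * (t - a)))"
proof (rule field_le_epsilon)
  fix \<epsilon> :: real assume "\<epsilon> > 0"
  define \<delta> where "\<delta> = \<epsilon> / (1 + 1 / (-c))"
  have \<delta>: "\<delta> > 0" using \<open>\<epsilon> > 0\<close> c unfolding \<delta>_def by (simp add: add_pos_pos)
  \<comment> \<open>solution of the strictly perturbed problem \<open>\<psi>' = c \<psi> + D + \<delta>\<close>, \<open>\<psi> a = N (w a) + \<delta>\<close>\<close>
  define psi where
    "psi s = exp (c * (s - a)) * (N (w a) + \<delta>) + (D + \<delta>) / (-c) * (1 - exp (c * (s - a)))" for s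
  have exp_le_1: "exp (c * (s - a)) \<le> 1" if "a \<le> s" for s
    using c that by (simp add: mult_nonpos_nonneg)
  have "N (w t) < psi t"
  proof (rule lt_of_left_Dini_lt_derivative[OF _ _ _ _ _ t])
    have "continuous_on {a..b} w"
      using der has_vector_derivative_continuous continuous_on_eq_continuous_within by blast
    then show "continuous_on {a..b} (\<lambda>s. N (w s))"
      by (rule continuous_on_compose2[OF is_norm_continuous_on[OF normN]]) auto
    show "continuous_on {a..b} psi" unfolding psi_def by (intro continuous_intros)
    show "N (w a) < psi a" unfolding psi_def using \<delta> by simp
    show "(psi has_real_derivative c * psi s + D + \<delta>) (at s)" for s
      unfolding psi_def using c by (auto intro!: derivative_eq_intros simp: field_simps)
    fix t' assume t': "t' \<in> {a<..b}" "N (w t') = psi t'"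
    have "N (w a) + \<delta> > 0" using \<delta> is_normD(1)[OF normN, of "w a"] by simp
    moreover have "(D + \<delta>) / (-c) * (1 - exp (c * (t' - a))) \<ge> 0"
      using exp_le_1[of t'] t' c D \<delta> by (intro mult_nonneg_nonneg divide_nonneg_pos) auto
    ultimately have "psi t' > 0" unfolding psi_def by (intro add_pos_nonneg) auto
    then have pos: "N (w t') > 0" using t'(2) by simp
    have osl': "wp (v t') (w t') \<le> (c * N (w t') + D) * N (w t')"
      using osl[of t'] t' by (simp add: power2_eq_square algebra_simps)
    have "\<forall>\<epsilon>>0. \<exists>d>0. \<forall>s\<in>{a..t'}. t' - d < s \<longrightarrow>
        N (w t') \<le> N (w s) + (t' - s) * (c * N (w t') + D + \<epsilon>)"
    proof (intro allI impI)
      fix \<epsilon> :: real assume "\<epsilon> > 0"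
      from weak_pairing_left_Dini_bound[OF normN wpc der osl' pos this] t'(1)
      show "\<exists>d>0. \<forall>s\<in>{a..t'}. t' - d < s \<longrightarrow>
          N (w t') \<le> N (w s) + (t' - s) * (c * N (w t') + D + \<epsilon>)"
        by (auto simp: add.assoc)
    qed
    moreover have "c * N (w t') + D < c * psi t' + D + \<delta>" using t'(2) \<delta> by simp
    ultimately show "\<exists>K < c * psi t' + D + \<delta>. \<forall>\<epsilon>>0. \<exists>d>0.
        \<forall>s\<in>{a..t'}. t' - d < s \<longrightarrow> N (w t') \<le> N (w s) + (t' - s) * (K + \<epsilon>)"
      by (metis add.assoc)
  qed
  also have "psi t = exp (c * (t - a)) * N (w a) + D / (-c) * (1 - exp (c * (t - a)))
      + \<delta> * (exp (c * (t - a)) + (1 - exp (c * (t - a))) / (-c))"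
    unfolding psi_def using c by (simp add: field_simps)
  also have "\<delta> * (exp (c * (t - a)) + (1 - exp (c * (t - a))) / (-c)) \<le> \<delta> * (1 + 1 / (-c))"
    using exp_le_1[of t] t c \<delta> by (intro mult_left_mono add_mono divide_right_mono) auto
  also have "\<delta> * (1 + 1 / (-c)) = \<epsilon>" unfolding \<delta>_def using c by (simp add: field_simps)
  finally show "N (w t) \<le> exp (c * (t - a)) * N (w a) + D / (-c) * (1 - exp (c * (t - a))) + \<epsilon>"
    by simp
qed

definition weighted_contraction :: "real \<Rightarrow> real \<Rightarrow> real \<Rightarrow> real \<Rightarrow> real \<Rightarrow> real \<Rightarrow> bool" where
  "weighted_contraction m11 m12 m21 m22 \<eta> \<theta> \<longleftrightarrow>
     (\<forall>A B A' B'. 0 \<le> A \<longrightarrow> 0 \<le> B \<longrightarrow> 0 \<le> A' \<longrightarrow> 0 \<le> B' \<longrightarrow>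
        A' \<le> m11 * A + m12 * B \<longrightarrow> B' \<le> m21 * A + m22 * B \<longrightarrow>
        A'\<^sup>2 + \<eta> * B'\<^sup>2 \<le> \<theta>\<^sup>2 * (A\<^sup>2 + \<eta> * B\<^sup>2))"

lemma weighted_square_of_sum_le:
  fixes p q s A B :: real
  assumes "p \<ge> 0" "q \<ge> 0" "s > 0"
  shows "(p * A + q * B)\<^sup>2 \<le> (p + q * s) * (p * A\<^sup>2 + q * B\<^sup>2 / s)"
proof -
  have "(p + q * s) * (p * A\<^sup>2 + q * B\<^sup>2 / s) - (p * A + q * B)\<^sup>2 = p * q * (s * A - B)\<^sup>2 / s"
    using assms by (simp add: field_simps power2_eq_square)
  also have "\<dots> \<ge> 0" using assms by simp
  finally show ?thesis by simp
qed

text \<open>Schur test: \<open>(1, s)\<close> and \<open>(1, u)\<close> are right and left sub-eigenvectors of the matrix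
  for the eigenvalue bound \<open>\<theta>\<close>.\<close>
lemma weighted_contraction_SchurI:
  assumes m: "m11 \<ge> 0" "m12 \<ge> 0" "m21 \<ge> 0" "m22 \<ge> 0" and su: "s > 0" "u > 0" "\<theta> \<ge> 0"
    and right: "m11 + m12 * s \<le> \<theta>" "m21 + m22 * s \<le> \<theta> * s"
    and left: "m11 + m21 * u \<le> \<theta>" "m12 + m22 * u \<le> \<theta> * u"
  shows "weighted_contraction m11 m12 m21 m22 (u / s) \<theta>"
  unfolding weighted_contraction_def
proof (intro allI impI)
  fix A B A' B' :: real
  assume AB: "0 \<le> A" "0 \<le> B" "0 \<le> A'" "0 \<le> B'"
    and A': "A' \<le> m11 * A + m12 * B" and B': "B' \<le> m21 * A + m22 * B"
  define P where "P = m11 * A\<^sup>2 + m12 * B\<^sup>2 / s"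
  define Q where "Q = m21 * A\<^sup>2 + m22 * B\<^sup>2 / s"
  have PQ: "P \<ge> 0" "Q \<ge> 0" unfolding P_def Q_def using m su by auto
  have "A'\<^sup>2 \<le> (m11 * A + m12 * B)\<^sup>2" using A' AB by (intro power_mono) auto
  also have "\<dots> \<le> (m11 + m12 * s) * P"
    unfolding P_def by (rule weighted_square_of_sum_le) (use m su in auto)
  also have "\<dots> \<le> \<theta> * P" by (rule mult_right_mono[OF right(1) PQ(1)])
  finally have A'_le: "A'\<^sup>2 \<le> \<theta> * P" .
  have "B'\<^sup>2 \<le> (m21 * A + m22 * B)\<^sup>2" using B' AB by (intro power_mono) auto
  also have "\<dots> \<le> (m21 + m22 * s) * Q"
    unfolding Q_def by (rule weighted_square_of_sum_le) (use m su in auto)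
  also have "\<dots> \<le> (\<theta> * s) * Q" by (rule mult_right_mono[OF right(2) PQ(2)])
  finally have "(u / s) * B'\<^sup>2 \<le> (u / s) * ((\<theta> * s) * Q)"
    using su by (intro mult_left_mono) auto
  also have "\<dots> = \<theta> * u * Q" using su by simp
  finally have B'_le: "(u / s) * B'\<^sup>2 \<le> \<theta> * u * Q" .
  have "\<theta> * P + \<theta> * u * Q = \<theta> * ((m11 + m21 * u) * A\<^sup>2 + (m12 + m22 * u) * (B\<^sup>2 / s))"
    unfolding P_def Q_def by (simp add: algebra_simps add_divide_distrib)
  then have "A'\<^sup>2 + (u / s) * B'\<^sup>2 \<le> \<theta> * ((m11 + m21 * u) * A\<^sup>2 + (m12 + m22 * u) * (B\<^sup>2 / s))"
    using A'_le B'_le by linarith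
  also have "\<dots> \<le> \<theta> * (\<theta> * A\<^sup>2 + (\<theta> * u) * (B\<^sup>2 / s))"
    using left su by (intro mult_left_mono add_mono mult_right_mono) auto
  also have "\<dots> = \<theta>\<^sup>2 * (A\<^sup>2 + (u / s) * B\<^sup>2)" by (simp add: power2_eq_square algebra_simps)
  finally show "A'\<^sup>2 + (u / s) * B'\<^sup>2 \<le> \<theta>\<^sup>2 * (A\<^sup>2 + (u / s) * B\<^sup>2)" .
qed

text \<open>The hypotheses say that the nonnegative matrix has spectral radius below \<open>1\<close>.\<close>
lemma weighted_contraction_exists:
  assumes m11: "0 \<le> m11" "m11 < 1" and m12: "0 < m12" and m21: "0 < m21"
    and m22: "0 \<le> m22" "m22 < 1" and det: "m12 * m21 < (1 - m11) * (1 - m22)"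
  obtains \<eta> \<theta> where "0 < \<eta>" "0 < \<theta>" "\<theta> < 1" "weighted_contraction m11 m12 m21 m22 \<eta> \<theta>"
proof -
  define q where "q = 1 - m22"
  have q: "q > 0" unfolding q_def using m22 by simp
  have "m21 * m12 < (1 - m11) * q" "m12 * m21 < (1 - m11) * q"
    using det mult.commute[of m12 m21] unfolding q_def by linarith+
  then have "m21 / q < (1 - m11) / m12" "m12 / q < (1 - m11) / m21"
    using q m12 m21 by (simp_all add: field_simps)
  then obtain s u where s: "m21 / q < s" "s < (1 - m11) / m12"
    and u: "m12 / q < u" "u < (1 - m11) / m21"
    by (meson dense)
  have su: "s > 0" "u > 0"
    using s(1) u(1) divide_pos_pos[OF m21 q] divide_pos_pos[OF m12 q] by linarith+
  define \<theta> where "\<theta> = max (max (m11 + m12 * s) ((m21 + m22 * s) / s))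
                         (max (m11 + m21 * u) ((m12 + m22 * u) / u))"
  have "m11 + m12 * s < 1" using s(2) m12 by (simp add: less_divide_eq algebra_simps)
  moreover have "m21 + m22 * s < s"
    using s(1) q unfolding q_def by (simp add: divide_less_eq algebra_simps)
  moreover have "m11 + m21 * u < 1" using u(2) m21 by (simp add: less_divide_eq algebra_simps)
  moreover have "m12 + m22 * u < u"
    using u(1) q unfolding q_def by (simp add: divide_less_eq algebra_simps)
  ultimately have "\<theta> < 1" unfolding \<theta>_def using su by (simp add: divide_less_eq)
  have bounds: "m11 + m12 * s \<le> \<theta>" "(m21 + m22 * s) / s \<le> \<theta>"
    "m11 + m21 * u \<le> \<theta>" "(m12 + m22 * u) / u \<le> \<theta>"
    unfolding \<theta>_def by simp_all
  have "m11 + m12 * s > 0" using m11 m12 su by (simp add: add_nonneg_pos)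
  then have "\<theta> > 0" using bounds(1) by linarith
  from bounds have "weighted_contraction m11 m12 m21 m22 (u / s) \<theta>"
    using m11 m12 m21 m22 su \<open>\<theta> > 0\<close>
    by (intro weighted_contraction_SchurI) (simp_all add: pos_divide_le_eq)
  moreover have "u / s > 0" using su by simp
  ultimately show ?thesis using that \<open>\<theta> > 0\<close> \<open>\<theta> < 1\<close> by blast
qed

lemma quotient_le_of_SUP_le:
  assumes "(SUP p\<in>S. case p of (a, b, c) \<Rightarrow> ereal (F a b c / H a b c)) \<le> ereal L"
    and "(a, b, c) \<in> S" and "H a b c > 0"
  shows "F a b c \<le> L * H a b c"
proof -
  have "ereal (F a b c / H a b c) \<le> ereal L"
    using order_trans[OF SUP_upper[OF assms(2)] assms(1)] by simp
  then show ?thesis using assms(3) by (simp add: divide_le_eq)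
qed

lemma Lip_z_f_le:
  assumes "Lip_z_f nX nZ X Z f \<le> ereal L" "is_norm nX" "is_norm nZ" "x \<in> X" "z1 \<in> Z" "z2 \<in> Z"
  shows "nX (f (x, z1) - f (x, z2)) \<le> L * nZ (z1 - z2)"
proof (cases "z1 = z2")
  case False
  show ?thesis
    by (rule quotient_le_of_SUP_le[where F = "\<lambda>x z1 z2. nX (f (x, z1) - f (x, z2))"
          and H = "\<lambda>x z1 z2. nZ (z1 - z2)", OF assms(1)[unfolded Lip_z_f_def]])
      (use assms False is_normD(6)[OF assms(3)] in auto)
qed (simp add: is_normD[OF assms(2)] is_normD[OF assms(3)])

lemma Lip_x_G_le:
  assumes "Lip_x_G nX nZ X Z G \<le> ereal L" "is_norm nX" "is_norm nZ" "z \<in> Z" "x1 \<in> X" "x2 \<in> X"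
  shows "nZ (G (x1, z) - G (x2, z)) \<le> L * nX (x1 - x2)"
proof (cases "x1 = x2")
  case False
  show ?thesis
    by (rule quotient_le_of_SUP_le[where F = "\<lambda>z x1 x2. nZ (G (x1, z) - G (x2, z))"
          and H = "\<lambda>z x1 x2. nX (x1 - x2)", OF assms(1)[unfolded Lip_x_G_def]])
      (use assms False is_normD(6)[OF assms(2)] in auto)
qed (simp add: is_normD[OF assms(2)] is_normD[OF assms(3)])

lemma Lip_z_G_le:
  assumes "Lip_z_G nZ X Z G \<le> ereal L" "is_norm nZ" "x \<in> X" "z1 \<in> Z" "z2 \<in> Z"
  shows "nZ (G (x, z1) - G (x, z2)) \<le> L * nZ (z1 - z2)"
proof (cases "z1 = z2")
  case False
  show ?thesis
    by (rule quotient_le_of_SUP_le[where F = "\<lambda>x z1 z2. nZ (G (x, z1) - G (x, z2))"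
          and H = "\<lambda>x z1 z2. nZ (z1 - z2)", OF assms(1)[unfolded Lip_z_G_def]])
      (use assms False is_normD(6)[OF assms(2)] in auto)
qed (simp add: is_normD[OF assms(2)])

lemma osLip_x_f_le:
  assumes "osLip_x_f wp nX X Z f \<le> ereal L" "is_norm nX" "compatible_weak_pairing wp nX"
    "z \<in> Z" "x1 \<in> X" "x2 \<in> X"
  shows "wp (f (x1, z) - f (x2, z)) (x1 - x2) \<le> L * (nX (x1 - x2))\<^sup>2"
proof (cases "x1 = x2")
  case True
  then show ?thesis
    using compatible_weak_pairingD(2)[OF assms(3,2), of 0] is_normD(2)[OF assms(2)] by simp
next
  case False
  show ?thesis
    by (rule quotient_le_of_SUP_le[where F = "\<lambda>z x1 x2. wp (f (x1, z) - f (x2, z)) (x1 - x2)"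
          and H = "\<lambda>z x1 x2. (nX (x1 - x2))\<^sup>2", OF assms(1)[unfolded osLip_x_f_def]])
      (use assms False is_normD(6)[OF assms(2), of "x1 - x2"] in auto)
qed

lemma Lipschitz_constants_real:
  assumes normX: "is_norm nX" and normZ: "is_norm nZ" and X0: "0 \<in> X" and Z0: "0 \<in> Z"
    and A2f: "0 < Lip_z_f nX nZ X Z f" "Lip_z_f nX nZ X Z f < \<infinity>"
    and A2G: "0 < Lip_x_G nX nZ X Z G" "Lip_x_G nX nZ X Z G < \<infinity>"
    and A3: "Lip_z_G nZ X Z G < 1"
    and cond: "- osLip_x_f wp nX X Z f * (1 - Lip_z_G nZ X Z G)
                 > Lip_z_f nX nZ X Z f * Lip_x_G nX nZ X Z G"
  obtains Lf LG l c where "Lip_z_f nX nZ X Z f = ereal Lf" "Lip_x_G nX nZ X Z G = ereal LG"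
    "Lip_z_G nZ X Z G = ereal l" "osLip_x_f wp nX X Z f = ereal c"
    "0 < Lf" "0 < LG" "0 \<le> l" "l < 1" "Lf * LG < - c * (1 - l)"
proof -
  obtain Lf where Lf: "Lip_z_f nX nZ X Z f = ereal Lf" "0 < Lf"
    using A2f by (cases "Lip_z_f nX nZ X Z f") auto
  obtain LG where LG: "Lip_x_G nX nZ X Z G = ereal LG" "0 < LG"
    using A2G by (cases "Lip_x_G nX nZ X Z G") auto
  have "{(x, z1, z2). x \<in> X \<and> z1 \<in> Z \<and> z2 \<in> Z \<and> z1 \<noteq> z2} \<noteq> {}" (is "?S \<noteq> {}")
  proof
    assume "?S = {}"
    then have "Lip_z_f nX nZ X Z f = -\<infinity>"
      unfolding Lip_z_f_def by (simp only: SUP_empty bot_ereal_def)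
    then show False using A2f(1) by simp
  qed
  then obtain z1 z2 where z12: "z1 \<in> Z" "z2 \<in> Z" "z1 \<noteq> z2" by blast
  have "{(z, x1, x2). z \<in> Z \<and> x1 \<in> X \<and> x2 \<in> X \<and> x1 \<noteq> x2} \<noteq> {}" (is "?S \<noteq> {}")
  proof
    assume "?S = {}"
    then have "Lip_x_G nX nZ X Z G = -\<infinity>"
      unfolding Lip_x_G_def by (simp only: SUP_empty bot_ereal_def)
    then show False using A2G(1) by simp
  qed
  then obtain x1 x2 where x12: "x1 \<in> X" "x2 \<in> X" "x1 \<noteq> x2" by blast
  have "ereal (nZ (G (0, z1) - G (0, z2)) / nZ (z1 - z2)) \<le> Lip_z_G nZ X Z G"
    unfolding Lip_z_G_def by (rule SUP_upper2[of "(0, z1, z2)"]) (use X0 z12 in auto)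
  moreover have "0 \<le> nZ (G (0, z1) - G (0, z2)) / nZ (z1 - z2)"
    using is_normD(1)[OF normZ] by simp
  ultimately have "0 \<le> Lip_z_G nZ X Z G" by (meson ereal_less_eq(5) order_trans)
  then obtain l where l: "Lip_z_G nZ X Z G = ereal l" "0 \<le> l" "l < 1"
    using A3 by (cases "Lip_z_G nZ X Z G") auto
  have "ereal (wp (f (x1, 0) - f (x2, 0)) (x1 - x2) / (nX (x1 - x2))\<^sup>2) \<le> osLip_x_f wp nX X Z f"
    unfolding osLip_x_f_def by (rule SUP_upper2[of "(0, x1, x2)"]) (use Z0 x12 in auto)
  then have "osLip_x_f wp nX X Z f \<noteq> -\<infinity>" by auto
  moreover have "osLip_x_f wp nX X Z f \<noteq> \<infinity>"
    using cond l by (auto simp: one_ereal_def)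
  ultimately obtain c where c: "osLip_x_f wp nX X Z f = ereal c"
    by (cases "osLip_x_f wp nX X Z f") auto
  have "Lf * LG < - c * (1 - l)" using cond c l Lf LG by (simp add: one_ereal_def)
  then show ?thesis using that Lf LG l c by blast
qed

lemma Giter_in:
  assumes "G ` (X \<times> Z) \<subseteq> Z" "x \<in> X" "z \<in> Z"
  shows "Giter G m x z \<in> Z"
  by (induction m) (use assms in auto)

lemma Giter_zero: "G (0, 0) = 0 \<Longrightarrow> Giter G m 0 0 = 0"
  by (induction m) auto

lemma Giter_dist_le:
  assumes GZ: "G ` (X \<times> Z) \<subseteq> Z" and normZ: "is_norm nZ"
    and Lx: "\<And>z x1 x2. z \<in> Z \<Longrightarrow> x1 \<in> X \<Longrightarrow> x2 \<in> X \<Longrightarrow>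
      nZ (G (x1, z) - G (x2, z)) \<le> LG * nX (x1 - x2)"
    and Lz: "\<And>x z1 z2. x \<in> X \<Longrightarrow> z1 \<in> Z \<Longrightarrow> z2 \<in> Z \<Longrightarrow>
      nZ (G (x, z1) - G (x, z2)) \<le> l * nZ (z1 - z2)"
    and l: "0 \<le> l" and x: "x \<in> X" "x' \<in> X" and z: "z \<in> Z" "z' \<in> Z"
  shows "nZ (Giter G m x z - Giter G m x' z')
    \<le> LG * (\<Sum>i<m. l ^ i) * nX (x - x') + l ^ m * nZ (z - z')"
proof (induction m)
  case (Suc m)
  let ?g = "Giter G m x z" and ?g' = "Giter G m x' z'"
  have g: "?g \<in> Z" "?g' \<in> Z" using Giter_in[OF GZ] x z by auto
  have "nZ (G (x, ?g) - G (x', ?g')) \<le> nZ (G (x, ?g) - G (x', ?g)) + nZ (G (x', ?g) - G (x', ?g'))"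
    using is_normD(3)[OF normZ, of "G (x, ?g) - G (x', ?g)" "G (x', ?g) - G (x', ?g')"] by simp
  also have "\<dots> \<le> LG * nX (x - x') + l * nZ (?g - ?g')" using Lx[OF g(1) x] Lz[OF x(2) g] by linarith
  also have "\<dots> \<le> LG * nX (x - x') + l * (LG * (\<Sum>i<m. l ^ i) * nX (x - x') + l ^ m * nZ (z - z'))"
    using Suc l by (intro add_left_mono mult_left_mono) auto
  also have "\<dots> = LG * (1 + l * (\<Sum>i<m. l ^ i)) * nX (x - x') + l ^ Suc m * nZ (z - z')"
    by (simp add: algebra_simps)
  also have "1 + l * (\<Sum>i<m. l ^ i) = (\<Sum>i<Suc m. l ^ i)"
    by (subst sum.lessThan_Suc_shift) (simp add: sum_distrib_left)
  finally show ?case by simp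
qed simp

lemma sqrt_sq_add_mult_le:
  fixes A B \<kappa> \<eta> :: real
  assumes "\<eta> > 0"
  shows "sqrt ((A + \<kappa> * B)\<^sup>2 + \<eta> * B\<^sup>2) \<le> sqrt (2 + 2 * \<kappa>\<^sup>2 / \<eta>) * sqrt (A\<^sup>2 + \<eta> * B\<^sup>2)"
proof -
  have "(A + \<kappa> * B)\<^sup>2 \<le> 2 * A\<^sup>2 + 2 * \<kappa>\<^sup>2 * B\<^sup>2"
    using sum_squares_bound[of A "\<kappa> * B"] by (simp add: power2_eq_square algebra_simps)
  moreover have "(2 + 2 * \<kappa>\<^sup>2 / \<eta>) * (A\<^sup>2 + \<eta> * B\<^sup>2)
      = 2 * A\<^sup>2 + 2 * \<kappa>\<^sup>2 * B\<^sup>2 + \<eta> * B\<^sup>2 + (\<eta> * B\<^sup>2 + 2 * \<kappa>\<^sup>2 * A\<^sup>2 / \<eta>)"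
    using assms by (simp add: field_simps)
  moreover have "0 \<le> \<eta> * B\<^sup>2 + 2 * \<kappa>\<^sup>2 * A\<^sup>2 / \<eta>" using assms by simp
  ultimately show ?thesis by (simp add: real_sqrt_mult[symmetric])
qed

lemma power_floor_le_exp:
  fixes \<theta> T t :: real
  assumes "0 < \<theta>" "\<theta> < 1" "0 < T" "0 \<le> t"
  shows "\<theta> ^ nat \<lfloor>t / T\<rfloor> \<le> exp (ln \<theta> / T * t) / \<theta>"
proof -
  define k where "k = nat \<lfloor>t / T\<rfloor>"
  have "real k = \<lfloor>t / T\<rfloor>" unfolding k_def using assms by simp
  then have "t / T \<le> real (Suc k)"
    using real_of_int_floor_add_one_gt[of "t / T"] by linarith
  then have "(t / T) * ln \<theta> \<ge> real (Suc k) * ln \<theta>"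
    using assms by (intro mult_right_mono_neg) auto
  then have "\<theta> ^ Suc k \<le> exp ((t / T) * ln \<theta>)"
    using assms exp_of_nat_mult[of "Suc k" "ln \<theta>"] by (metis exp_le_cancel_iff exp_ln)
  then show ?thesis unfolding k_def using assms by (simp add: field_simps)
qed

lemma is_solutionD:
  assumes "is_solution f G X Z T n x zs"
  shows "t \<ge> 0 \<Longrightarrow> x t \<in> X" "zs k \<in> Z" "zs (Suc k) = Giter G n (x (real k * T)) (zs k)"
    "t \<in> {real k * T .. real (Suc k) * T} \<Longrightarrow>
       (x has_vector_derivative f (x t, zs (Suc k))) (at t within {real k * T .. real (Suc k) * T})"
  using assms unfolding is_solution_def by auto

lemma is_solution_zero:
  assumes "0 \<in> X" "0 \<in> Z" "f (0, 0) = 0" "G (0, 0) = 0"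
  shows "is_solution f G X Z T n (\<lambda>_. 0) (\<lambda>_. 0)"
  unfolding is_solution_def using assms
  by (auto simp: Giter_zero intro: has_vector_derivative_const)

lemma held_sample: "T > 0 \<Longrightarrow> held T zs (real k * T) = zs (Suc k)"
  unfolding held_def by simp

definition sampled_contractive ::
  "('x::real_normed_vector \<times> 'z \<Rightarrow> 'x) \<Rightarrow> ('x \<times> 'z \<Rightarrow> 'z) \<Rightarrow> 'x set \<Rightarrow> 'z set \<Rightarrow> real \<Rightarrow> nat \<Rightarrow>
   ('x \<Rightarrow> 'z::minus \<Rightarrow> real) \<Rightarrow> bool" where
  "sampled_contractive f G X Z T n N \<longleftrightarrow>
     (\<exists>b. 0 < b \<and> b < 1 \<and>
        (\<forall>x zs xb zsb k. is_solution f G X Z T n x zs \<longrightarrow> is_solution f G X Z T n xb zsb \<longrightarrow>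
           N (x (real k * T) - xb (real k * T)) (held T zs (real k * T) - held T zsb (real k * T))
           \<le> b ^ k * N (x 0 - xb 0) (held T zs 0 - held T zsb 0)))"

definition globally_exponentially_stable ::
  "('x::real_normed_vector \<times> 'z \<Rightarrow> 'x) \<Rightarrow> ('x \<times> 'z \<Rightarrow> 'z) \<Rightarrow> 'x set \<Rightarrow> 'z set \<Rightarrow> real \<Rightarrow> nat \<Rightarrow>
   ('x \<Rightarrow> 'z \<Rightarrow> real) \<Rightarrow> bool" where
  "globally_exponentially_stable f G X Z T n N \<longleftrightarrow>
     (\<exists>r a. r \<ge> 0 \<and> a > 0 \<and>
        (\<forall>x zs t. is_solution f G X Z T n x zs \<longrightarrow> t \<ge> 0 \<longrightarrow>
           N (x t) (held T zs t) \<le> r * exp (- a * t) * N (x 0) (held T zs 0)))"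

locale sampled_small_gain =
  fixes nX :: "real^'nx \<Rightarrow> real" and nZ :: "real^'nz \<Rightarrow> real"
    and wp :: "real^'nx \<Rightarrow> real^'nx \<Rightarrow> real"
    and X :: "(real^'nx) set" and Z :: "(real^'nz) set"
    and f :: "(real^'nx) \<times> (real^'nz) \<Rightarrow> real^'nx"
    and G :: "(real^'nx) \<times> (real^'nz) \<Rightarrow> real^'nz"
    and Lf LG l c T :: real and n :: nat
  assumes normX: "is_norm nX" and normZ: "is_norm nZ"
    and wp: "compatible_weak_pairing wp nX" and GZ: "G ` (X \<times> Z) \<subseteq> Z"
    and f_Lipschitz_z: "\<And>x z1 z2. x \<in> X \<Longrightarrow> z1 \<in> Z \<Longrightarrow> z2 \<in> Z \<Longrightarrow>
      nX (f (x, z1) - f (x, z2)) \<le> Lf * nZ (z1 - z2)"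
    and G_Lipschitz_x: "\<And>z x1 x2. z \<in> Z \<Longrightarrow> x1 \<in> X \<Longrightarrow> x2 \<in> X \<Longrightarrow>
      nZ (G (x1, z) - G (x2, z)) \<le> LG * nX (x1 - x2)"
    and G_Lipschitz_z: "\<And>x z1 z2. x \<in> X \<Longrightarrow> z1 \<in> Z \<Longrightarrow> z2 \<in> Z \<Longrightarrow>
      nZ (G (x, z1) - G (x, z2)) \<le> l * nZ (z1 - z2)"
    and f_one_sided_Lipschitz_x: "\<And>z x1 x2. z \<in> Z \<Longrightarrow> x1 \<in> X \<Longrightarrow> x2 \<in> X \<Longrightarrow>
      wp (f (x1, z) - f (x2, z)) (x1 - x2) \<le> c * (nX (x1 - x2))\<^sup>2"
    and Lf_pos: "0 < Lf" and LG_pos: "0 < LG" and l_nonneg: "0 \<le> l" and l_lt_1: "l < 1"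
    and small_gain: "Lf * LG < - c * (1 - l)"
    and T_pos: "0 < T" and n_pos: "0 < n"
    and X0: "0 \<in> X" and Z0: "0 \<in> Z" and f00: "f (0, 0) = 0" and G00: "G (0, 0) = 0"
begin

lemma c_neg: "c < 0"
proof -
  have "0 < - c * (1 - l)" using small_gain mult_pos_pos[OF Lf_pos LG_pos] by linarith
  then show ?thesis using l_lt_1 by (simp add: mult_less_0_iff)
qed

definition x_gain :: real where "x_gain = Lf / (- c)"
definition x_decay :: real where "x_decay = exp (c * T)"
definition z_gain :: real where "z_gain = LG * (\<Sum>i<n. l ^ i)"
definition z_decay :: real where "z_decay = l ^ n"

lemma x_gain_pos: "0 < x_gain"
  unfolding x_gain_def using Lf_pos c_neg by (intro divide_pos_pos) auto

lemma x_decay: "0 < x_decay" "x_decay < 1"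
  unfolding x_decay_def using c_neg T_pos by (auto simp: mult_neg_pos)

lemma z_decay: "0 \<le> z_decay" "z_decay < 1"
  unfolding z_decay_def using power_strict_mono[of l 1 n] l_nonneg l_lt_1 n_pos by auto

lemma geometric_sum_mult: "(\<Sum>i<n. l ^ i) * (1 - l) = 1 - z_decay"
  unfolding z_decay_def using l_lt_1 by (simp add: sum_gp_strict)

lemma z_gain_pos: "0 < z_gain"
proof -
  have "0 < (\<Sum>i<n. l ^ i) * (1 - l)" using geometric_sum_mult z_decay by simp
  then show ?thesis unfolding z_gain_def using LG_pos l_lt_1 by (simp add: zero_less_mult_iff)
qed

lemma small_gain_sampled: "z_gain * x_gain < 1 - z_decay"
proof -
  have "LG * Lf < (1 - l) * (- c)" using small_gain by (simp add: algebra_simps)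
  then have "LG * Lf / (- c) < 1 - l" using c_neg by (subst pos_divide_less_eq) auto
  moreover have "(\<Sum>i<n. l ^ i) > 0" using z_gain_pos LG_pos unfolding z_gain_def
    by (simp add: zero_less_mult_iff)
  ultimately have "(\<Sum>i<n. l ^ i) * (LG * Lf / (- c)) < (\<Sum>i<n. l ^ i) * (1 - l)"
    by (simp only: mult_strict_left_mono)
  then show ?thesis unfolding z_gain_def x_gain_def geometric_sum_mult[symmetric]
    by (simp add: algebra_simps)
qed

lemma sample_interval_bound:
  assumes sol: "is_solution f G X Z T n x zs" "is_solution f G X Z T n x' zs'"
    and t: "t \<in> {real k * T .. real (Suc k) * T}"
  shows "nX (x t - x' t) \<le> exp (c * (t - real k * T)) * nX (x (real k * T) - x' (real k * T))
      + x_gain * nZ (zs (Suc k) - zs' (Suc k)) * (1 - exp (c * (t - real k * T)))"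
proof -
  let ?z = "zs (Suc k)" and ?z' = "zs' (Suc k)" and ?I = "{real k * T .. real (Suc k) * T}"
  have z: "?z \<in> Z" "?z' \<in> Z" using is_solutionD(2) sol by blast+
  have osl: "wp (f (x s, ?z) - f (x' s, ?z')) (x s - x' s)
      \<le> c * (nX (x s - x' s))\<^sup>2 + Lf * nZ (?z - ?z') * nX (x s - x' s)" if "s \<in> ?I" for s
  proof -
    have "0 \<le> real k * T" using T_pos by simp
    then have "0 \<le> s" using that by simp
    then have xs: "x s \<in> X" "x' s \<in> X" using is_solutionD(1) sol by blast+
    have "f (x s, ?z) - f (x' s, ?z')
        = (f (x s, ?z) - f (x' s, ?z)) + (f (x' s, ?z) - f (x' s, ?z'))"
      by simp
    then have "wp (f (x s, ?z) - f (x' s, ?z')) (x s - x' s)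
        \<le> wp (f (x s, ?z) - f (x' s, ?z)) (x s - x' s)
          + wp (f (x' s, ?z) - f (x' s, ?z')) (x s - x' s)"
      using compatible_weak_pairingD(1)[OF wp normX] by metis
    also have "\<dots> \<le> c * (nX (x s - x' s))\<^sup>2 + nX (f (x' s, ?z) - f (x' s, ?z')) * nX (x s - x' s)"
      using f_one_sided_Lipschitz_x[OF z(1) xs] compatible_weak_pairingD(4)[OF wp normX]
      by (intro add_mono)
    also have "\<dots> \<le> c * (nX (x s - x' s))\<^sup>2 + Lf * nZ (?z - ?z') * nX (x s - x' s)"
      using f_Lipschitz_z[OF xs(2) z] is_normD(1)[OF normX] by (intro add_left_mono mult_right_mono)
    finally show ?thesis .
  qed
  have der: "((\<lambda>s. x s - x' s) has_vector_derivative f (x s, ?z) - f (x' s, ?z')) (at s within ?I)"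
    if "s \<in> ?I" for s
    using is_solutionD(4)[OF sol(1) that] is_solutionD(4)[OF sol(2) that]
    by (rule has_vector_derivative_diff)
  have "0 \<le> Lf * nZ (?z - ?z')" using Lf_pos is_normD(1)[OF normZ] by simp
  from norm_le_exp_comparison[OF normX wp c_neg this der osl t]
  show ?thesis unfolding x_gain_def by (simp add: algebra_simps)
qed

lemma sampled_error_step:
  fixes k :: nat
  assumes sol: "is_solution f G X Z T n x zs" "is_solution f G X Z T n x' zs'"
  defines "A \<equiv> nX (x (real k * T) - x' (real k * T))" and "B \<equiv> nZ (zs (Suc k) - zs' (Suc k))"
    and "A' \<equiv> nX (x (real (Suc k) * T) - x' (real (Suc k) * T))"
    and "B' \<equiv> nZ (zs (Suc (Suc k)) - zs' (Suc (Suc k)))"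
  shows "A' \<le> x_decay * A + x_gain * (1 - x_decay) * B" "B' \<le> z_gain * A' + z_decay * B"
proof -
  have "real (Suc k) * T \<in> {real k * T .. real (Suc k) * T}" using T_pos by simp
  from sample_interval_bound[OF sol this]
  show "A' \<le> x_decay * A + x_gain * (1 - x_decay) * B"
    unfolding A_def B_def A'_def x_decay_def by (simp add: algebra_simps)
  have "0 \<le> real (Suc k) * T" using T_pos by simp
  have "nZ (Giter G n (x (real (Suc k) * T)) (zs (Suc k))
      - Giter G n (x' (real (Suc k) * T)) (zs' (Suc k))) \<le> z_gain * A' + z_decay * B"
    unfolding z_gain_def z_decay_def A'_def B_def
    by (rule Giter_dist_le[OF GZ normZ G_Lipschitz_x G_Lipschitz_z l_nonneg])
      (use is_solutionD(1,2) sol \<open>0 \<le> real (Suc k) * T\<close> in auto)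
  then show "B' \<le> z_gain * A' + z_decay * B"
    unfolding B'_def using is_solutionD(3)[OF sol(1)] is_solutionD(3)[OF sol(2)] by simp
qed

lemma comparison_weighted_contraction:
  obtains \<eta> \<theta> where "0 < \<eta>" "0 < \<theta>" "\<theta> < 1"
    "weighted_contraction x_decay (x_gain * (1 - x_decay)) (z_gain * x_decay)
       (z_gain * x_gain * (1 - x_decay) + z_decay) \<eta> \<theta>"
proof -
  have "z_gain * x_gain * (1 - x_decay) \<le> z_gain * x_gain"
    using x_decay x_gain_pos z_gain_pos by simp
  then have m22: "z_gain * x_gain * (1 - x_decay) + z_decay < 1"
    using small_gain_sampled by linarith
  have "(1 - x_decay) * (1 - (z_gain * x_gain * (1 - x_decay) + z_decay))
      - x_gain * (1 - x_decay) * (z_gain * x_decay)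
      = (1 - x_decay) * (1 - z_decay - z_gain * x_gain)"
    by (simp add: algebra_simps)
  also have "\<dots> > 0" using x_decay small_gain_sampled by simp
  finally have det: "x_gain * (1 - x_decay) * (z_gain * x_decay)
      < (1 - x_decay) * (1 - (z_gain * x_gain * (1 - x_decay) + z_decay))" by simp
  show ?thesis
    by (rule weighted_contraction_exists[OF _ _ _ _ _ m22 det])
      (use x_decay x_gain_pos z_gain_pos z_decay in \<open>auto intro: that\<close>)
qed

context
  fixes \<eta> \<theta> :: real
  assumes \<eta>: "0 < \<eta>" and \<theta>: "0 < \<theta>" "\<theta> < 1"
    and contraction: "weighted_contraction x_decay (x_gain * (1 - x_decay)) (z_gain * x_decay)
       (z_gain * x_gain * (1 - x_decay) + z_decay) \<eta> \<theta>"
begin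

lemma sampled_error_contraction:
  assumes sol: "is_solution f G X Z T n x zs" "is_solution f G X Z T n x' zs'"
  shows "cmp_norm nX nZ 1 \<eta> (x (real (Suc k) * T) - x' (real (Suc k) * T))
      (zs (Suc (Suc k)) - zs' (Suc (Suc k)))
    \<le> \<theta> * cmp_norm nX nZ 1 \<eta> (x (real k * T) - x' (real k * T)) (zs (Suc k) - zs' (Suc k))"
proof -
  define A where "A = nX (x (real k * T) - x' (real k * T))"
  define B where "B = nZ (zs (Suc k) - zs' (Suc k))"
  define A' where "A' = nX (x (real (Suc k) * T) - x' (real (Suc k) * T))"
  define B' where "B' = nZ (zs (Suc (Suc k)) - zs' (Suc (Suc k)))"
  note step = sampled_error_step[OF sol, of k, folded A_def B_def A'_def B'_def]
  have "z_gain * A' \<le> z_gain * (x_decay * A + x_gain * (1 - x_decay) * B)"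
    using step(1) z_gain_pos by simp
  then have "B' \<le> (z_gain * x_decay) * A + (z_gain * x_gain * (1 - x_decay) + z_decay) * B"
    using step(2) by (simp add: algebra_simps)
  then have "A'\<^sup>2 + \<eta> * B'\<^sup>2 \<le> \<theta>\<^sup>2 * (A\<^sup>2 + \<eta> * B\<^sup>2)"
    by (intro contraction[unfolded weighted_contraction_def, rule_format] step(1))
      (simp_all add: A_def B_def A'_def B'_def is_normD(1)[OF normX] is_normD(1)[OF normZ])
  then have "sqrt (A'\<^sup>2 + \<eta> * B'\<^sup>2) \<le> sqrt (\<theta>\<^sup>2 * (A\<^sup>2 + \<eta> * B\<^sup>2))"
    by (rule real_sqrt_le_mono)
  also have "\<dots> = \<theta> * sqrt (A\<^sup>2 + \<eta> * B\<^sup>2)" using \<theta> by (simp add: real_sqrt_mult)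
  finally show ?thesis unfolding cmp_norm_def A_def B_def A'_def B'_def by simp
qed

lemma sampled_error_decay:
  assumes sol: "is_solution f G X Z T n x zs" "is_solution f G X Z T n x' zs'"
  shows "cmp_norm nX nZ 1 \<eta> (x (real k * T) - x' (real k * T)) (zs (Suc k) - zs' (Suc k))
    \<le> \<theta> ^ k * cmp_norm nX nZ 1 \<eta> (x 0 - x' 0) (zs (Suc 0) - zs' (Suc 0))"
proof (induction k)
  case (Suc k)
  then show ?case
    using order_trans[OF sampled_error_contraction[OF sol, of k] mult_left_mono[OF Suc]] \<theta>(1)
    by (simp add: mult.assoc)
qed simp

lemma exponential_decay:
  assumes sol: "is_solution f G X Z T n x zs" and t: "0 \<le> t"
  shows "cmp_norm nX nZ 1 \<eta> (x t) (held T zs t)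
    \<le> sqrt (2 + 2 * x_gain\<^sup>2 / \<eta>) / \<theta> * exp (ln \<theta> / T * t) * cmp_norm nX nZ 1 \<eta> (x 0) (held T zs 0)"
proof -
  define k where "k = nat \<lfloor>t / T\<rfloor>"
  have "real k = \<lfloor>t / T\<rfloor>" unfolding k_def using t T_pos by simp
  then have "real k \<le> t / T" "t / T \<le> real (Suc k)"
    using of_int_floor_le[of "t / T"] real_of_int_floor_add_one_gt[of "t / T"] by linarith+
  then have "t \<in> {real k * T .. real (Suc k) * T}"
    using T_pos by (simp add: le_divide_eq divide_le_eq)
  define A where "A = nX (x (real k * T))"
  define B where "B = nZ (zs (Suc k))"
  define E where "E = exp (c * (t - real k * T))"
  have sol0: "is_solution f G X Z T n (\<lambda>_. 0) (\<lambda>_. 0)"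
    by (rule is_solution_zero) (use X0 Z0 f00 G00 in auto)
  have "E > 0" "E \<le> 1" unfolding E_def using c_neg \<open>t \<in> _\<close> by (auto simp: mult_nonpos_nonneg)
  moreover have "A \<ge> 0" "B \<ge> 0" unfolding A_def B_def using is_normD(1) normX normZ by auto
  moreover have "nX (x t) \<le> E * A + x_gain * B * (1 - E)"
    using sample_interval_bound[OF sol sol0 \<open>t \<in> _\<close>] unfolding A_def B_def E_def by simp
  moreover have "E * A \<le> A" using \<open>A \<ge> 0\<close> \<open>E > 0\<close> \<open>E \<le> 1\<close> by (simp add: mult_left_le_one_le)
  moreover have "x_gain * B * (1 - E) \<le> x_gain * B"
    using \<open>B \<ge> 0\<close> \<open>E > 0\<close> x_gain_pos by (simp add: mult_left_le)
  ultimately have xt: "nX (x t) \<le> A + x_gain * B" by linarith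
  have "held T zs t = zs (Suc k)" unfolding held_def k_def ..
  then have "cmp_norm nX nZ 1 \<eta> (x t) (held T zs t) = sqrt ((nX (x t))\<^sup>2 + \<eta> * B\<^sup>2)"
    unfolding cmp_norm_def B_def by simp
  also have "\<dots> \<le> sqrt ((A + x_gain * B)\<^sup>2 + \<eta> * B\<^sup>2)"
    using xt is_normD(1)[OF normX] by (intro real_sqrt_le_mono add_right_mono power_mono)
  also have "\<dots> \<le> sqrt (2 + 2 * x_gain\<^sup>2 / \<eta>) * cmp_norm nX nZ 1 \<eta> (x (real k * T)) (zs (Suc k))"
    unfolding cmp_norm_def A_def B_def using sqrt_sq_add_mult_le[OF \<eta>] by simp
  also have "\<dots> \<le> sqrt (2 + 2 * x_gain\<^sup>2 / \<eta>) * (\<theta> ^ k * cmp_norm nX nZ 1 \<eta> (x 0) (held T zs 0))"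
    using sampled_error_decay[OF sol sol0, of k] \<eta> unfolding held_def by (intro mult_left_mono) auto
  also have "\<dots> \<le> sqrt (2 + 2 * x_gain\<^sup>2 / \<eta>)
      * (exp (ln \<theta> / T * t) / \<theta> * cmp_norm nX nZ 1 \<eta> (x 0) (held T zs 0))"
    using power_floor_le_exp[OF \<theta> T_pos t] \<eta> unfolding k_def cmp_norm_def
    by (intro mult_left_mono mult_right_mono) auto
  finally show ?thesis by simp
qed

end

lemma contractive_and_exponentially_stable:
  "\<exists>\<eta>1 \<eta>2. \<eta>1 > 0 \<and> \<eta>2 > 0 \<and> sampled_contractive f G X Z T n (cmp_norm nX nZ \<eta>1 \<eta>2)
     \<and> globally_exponentially_stable f G X Z T n (cmp_norm nX nZ \<eta>1 \<eta>2)"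
proof -
  obtain \<eta> \<theta> where \<eta>: "0 < \<eta>" and \<theta>: "0 < \<theta>" "\<theta> < 1"
    and contraction: "weighted_contraction x_decay (x_gain * (1 - x_decay)) (z_gain * x_decay)
       (z_gain * x_gain * (1 - x_decay) + z_decay) \<eta> \<theta>"
    by (rule comparison_weighted_contraction)
  have held0: "held T zs 0 = zs (Suc 0)" for zs :: "nat \<Rightarrow> real^'nz"
    using held_sample[OF T_pos, of zs 0] by simp
  have discrete: "\<forall>x zs x' zs' k. is_solution f G X Z T n x zs \<longrightarrow> is_solution f G X Z T n x' zs' \<longrightarrow>
      cmp_norm nX nZ 1 \<eta> (x (real k * T) - x' (real k * T))
        (held T zs (real k * T) - held T zs' (real k * T))
      \<le> \<theta> ^ k * cmp_norm nX nZ 1 \<eta> (x 0 - x' 0) (held T zs 0 - held T zs' 0)"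
    using sampled_error_decay[OF \<eta> \<theta> contraction] by (simp add: held_sample[OF T_pos] held0)
  have continuous: "\<forall>x zs t. is_solution f G X Z T n x zs \<longrightarrow> t \<ge> 0 \<longrightarrow>
      cmp_norm nX nZ 1 \<eta> (x t) (held T zs t)
      \<le> sqrt (2 + 2 * x_gain\<^sup>2 / \<eta>) / \<theta> * exp (- (- ln \<theta> / T) * t)
        * cmp_norm nX nZ 1 \<eta> (x 0) (held T zs 0)"
    using exponential_decay[OF \<eta> \<theta> contraction] by simp
  have rate: "0 < - ln \<theta> / T" using \<theta> T_pos by (simp add: divide_neg_pos)
  have gain: "0 \<le> sqrt (2 + 2 * x_gain\<^sup>2 / \<eta>) / \<theta>" using \<eta> \<theta> by simp
  have "sampled_contractive f G X Z T n (cmp_norm nX nZ 1 \<eta>)"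
    unfolding sampled_contractive_def using \<theta> discrete by blast
  moreover have "globally_exponentially_stable f G X Z T n (cmp_norm nX nZ 1 \<eta>)"
    unfolding globally_exponentially_stable_def using rate gain continuous by blast
  ultimately show ?thesis using \<eta> zero_less_one by blast
qed

end

theorem theorem1:
  fixes nX :: "real^'nx \<Rightarrow> real" and nZ :: "real^'nz \<Rightarrow> real"
    and wp :: "real^'nx \<Rightarrow> real^'nx \<Rightarrow> real"
    and X :: "(real^'nx) set" and Z :: "(real^'nz) set"
    and f :: "(real^'nx) \<times> (real^'nz) \<Rightarrow> real^'nx"
    and G :: "(real^'nx) \<times> (real^'nz) \<Rightarrow> real^'nz"
  assumes normX: "is_norm nX" and normZ: "is_norm nZ"
    and wp: "compatible_weak_pairing wp nX"
    and convX: "convex X" and convZ: "convex Z"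
    and contf: "continuous_on (X \<times> Z) f"
    and contG: "continuous_on (X \<times> Z) G" and GZ: "G ` (X \<times> Z) \<subseteq> Z"
    and X0: "0 \<in> X" and Z0: "0 \<in> Z"
    and f00: "f (0, 0) = 0" and G00: "G (0, 0) = 0"
    and A1: "Lip_x_f nX X Z f < \<infinity>"
    and A2f: "0 < Lip_z_f nX nZ X Z f" "Lip_z_f nX nZ X Z f < \<infinity>"
    and A2G: "0 < Lip_x_G nX nZ X Z G" "Lip_x_G nX nZ X Z G < \<infinity>"
    and A3: "Lip_z_G nZ X Z G < 1"
    and cond: "- osLip_x_f wp nX X Z f * (1 - Lip_z_G nZ X Z G)
                 > Lip_z_f nX nZ X Z f * Lip_x_G nX nZ X Z G"
  shows "\<forall>n::nat. n > 0 \<longrightarrow> (\<forall>T::real. T > 0 \<longrightarrow>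
     (\<exists>\<eta>1 \<eta>2. \<eta>1 > 0 \<and> \<eta>2 > 0 \<and>
       (\<exists>b. 0 < b \<and> b < 1 \<and>
          (\<forall>x zs xb zsb k. is_solution f G X Z T n x zs \<longrightarrow> is_solution f G X Z T n xb zsb \<longrightarrow>
             cmp_norm nX nZ \<eta>1 \<eta>2 (x (real k * T) - xb (real k * T))
                (held T zs (real k * T) - held T zsb (real k * T))
             \<le> b ^ k * cmp_norm nX nZ \<eta>1 \<eta>2 (x 0 - xb 0) (held T zs 0 - held T zsb 0))) \<and>
       (\<exists>r a. r \<ge> 0 \<and> a > 0 \<and>
          (\<forall>x zs t. is_solution f G X Z T n x zs \<longrightarrow> t \<ge> 0 \<longrightarrow>
             cmp_norm nX nZ \<eta>1 \<eta>2 (x t) (held T zs t)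
             \<le> r * exp (- a * t) * cmp_norm nX nZ \<eta>1 \<eta>2 (x 0) (held T zs 0)))))"
proof (intro allI impI, fold sampled_contractive_def globally_exponentially_stable_def)
  fix n :: nat and T :: real
  assume "0 < n" "0 < T"
  obtain Lf LG l c
    where Lf: "Lip_z_f nX nZ X Z f = ereal Lf" and LG: "Lip_x_G nX nZ X Z G = ereal LG"
    and l: "Lip_z_G nZ X Z G = ereal l" and c: "osLip_x_f wp nX X Z f = ereal c"
    and constants: "0 < Lf" "0 < LG" "0 \<le> l" "l < 1" "Lf * LG < - c * (1 - l)"
    using Lipschitz_constants_real[OF normX normZ X0 Z0 A2f A2G A3 cond] by blast
  have "sampled_small_gain nX nZ wp X Z f G Lf LG l c T n"
    using Lip_z_f_le[OF eq_refl[OF Lf] normX normZ] Lip_x_G_le[OF eq_refl[OF LG] normX normZ]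
      Lip_z_G_le[OF eq_refl[OF l] normZ] osLip_x_f_le[OF eq_refl[OF c] normX wp]
    by unfold_locales (use normX normZ wp GZ X0 Z0 f00 G00 constants \<open>0 < n\<close> \<open>0 < T\<close> in auto)
  then show "\<exists>\<eta>1 \<eta>2. \<eta>1 > 0 \<and> \<eta>2 > 0 \<and> sampled_contractive f G X Z T n (cmp_norm nX nZ \<eta>1 \<eta>2)
      \<and> globally_exponentially_stable f G X Z T n (cmp_norm nX nZ \<eta>1 \<eta>2)"
    by (rule sampled_small_gain.contractive_and_exponentially_stable)
qed

end
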